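(* Let $(\varphi,\Theta)$ be a linear discrete co-cycle generated by $A:\mathbb Z\times\Omega\to\mathcal L(X)$ admitting an exponential dichotomy with bound $K$ and exponent $\alpha$ on the full-measure $\theta$-invariant set $\tilde\Omega$. There exists a $\Theta$-invariant map $\delta$ with $0<\delta(\omega_p)<\frac{1-e^{-\alpha(\omega_p)}}{1+e^{-\alpha(\omega_p)}}$ such that, if $B:\mathbb Z\times\Omega\to\mathcal L(X)$ satisfies $\|B(\Theta_k\omega_p)\|_{\mathcal L(X)}\le\delta(\omega_p)K(\omega_p)^{-1}$ for all $k\in\mathbb Z$ and $(\psi,\Theta)$ denotes the discrete co-cycle generated by $A+B$, then for every $\omega_p\in\mathbb Z\times\tilde\Omega$ the sets $$V^+(\omega_p):=\{z\in X:\sup_{n\ge0}\|\psi(n,\omega_p)z\|_X<\infty\},$$ $$V^-(\omega_p):=\{z\in X:\text{there is a backwards bounded solution of }\Psi_{\omega_p}\text{ through }z\}$$ are closed subspaces with $X=V^+(\omega_p)\oplus V^-(\omega_p)$; moreover, for every $n\ge0$, $\psi(n,\omega_p)V^+(\omega_p)\subset V^+(\Theta_n\omega_p)$, $\psi(n,\omega_p)V^-(\omega_p)=V^-(\Theta_n\omega_p)$, and $\psi(n,\omega_p)|_{V^-(\omega_p)}:V^-(\omega_p)\to V^-(\Theta_n\omega_p)$ is an isomorphism.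
   Context: $X$ is a Banach space, $\mathcal L(X)$ the bounded linear operators on $X$, $(\Omega,\mathcal F,\mathbb P)$ a probability space, $\mathbb T\in\{\mathbb Z,\mathbb R\}$, $\mathbb T^+=\{t\in\mathbb T:t\ge0\}$. A random flow is a family of measurable maps $\theta_t:\Omega\to\Omega$, $t\in\mathbb T$, with $\theta_0=\mathrm{Id}_\Omega$ and $\theta_{t+s}=\theta_t\circ\theta_s$. For $\omega_\tau:=(\tau,\omega)\in\mathbb T\times\Omega$ put $\Theta_t\omega_\tau:=(t+\tau,\theta_t\omega)$. A map $D$ on $\mathbb T\times\Omega$ is $\Theta$-invariant if $D(\Theta_t\omega_\tau)=D(\omega_\tau)$ for all $t,\omega_\tau$; a set $\tilde\Omega\subset\Omega$ is $\theta$-invariant if $\theta_t\tilde\Omega=\tilde\Omega$ for all $t$. A linear co-cycle $(\varphi,\Theta)$ is a family $\varphi(t,\omega_\tau)\in\mathcal L(X)$, $t\in\mathbb T^+$, $\omega_\tau\in\mathbb T\times\Omega$, with $(t,\omega,x)\mapsto\varphi(t,\tau,\omega)x$ measurable for each $\tau$, $\varphi(0,\omega_\tau)=\mathrm{Id}_X$ and $\varphi(t+s,\omega_\tau)=\varphi(t,\Theta_s\omega_\tau)\varphi(s,\omega_\tau)$ for $t,s\in\mathbb T^+$. In the discrete case, $(\varphi,\Theta)$ is generated by $A:\mathbb Z\times\Omega\to\mathcal L(X)$ if $\varphi(n,\omega_p)=A(\Theta_{n-1}\omega_p)\circ\cdots\circ A(\omega_p)$ for $n\ge1$. For a co-cycle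 $\psi$ and fixed $\omega_p$, $\Psi_{\omega_p}$ is the evolution process $\psi_{n,m}(\omega_p):=\psi(n-m,\Theta_m\omega_p)$, $n\ge m$; a backwards bounded solution of $\Psi_{\omega_p}$ through $z$ is a sequence $\{\xi(n)\}_{n\le0}$ with $\xi(0)=z$, $\xi(n)=\psi_{n,m}(\omega_p)\xi(m)$ for $m\le n\le0$, and $\sup_{n\le0}\|\xi(n)\|_X<\infty$. Exponential dichotomy: $(\varphi,\Theta)$ admits an exponential dichotomy with bound $K$, exponent $\alpha$ and projections $\Pi^s$ if there are a $\theta$-invariant $\tilde\Omega\subset\Omega$ with $\mathbb P(\tilde\Omega)=1$, projections $\Pi^s(\omega_\tau)\in\mathcal L(X)$ for $\omega_\tau\in\mathbb T\times\tilde\Omega$ (with $\Pi^u:=\mathrm{Id}_X-\Pi^s$) and $\Theta$-invariant maps $K:\mathbb T\times\Omega\to[1,\infty)$, $\alpha:\mathbb T\times\Omega\to(0,\infty)$ such that for all $\omega_\tau\in\mathbb T\times\tilde\Omega$: (i) for each $\tau$ and $x\in X$, $\omega\mapsto\Pi^s(\tau,\omega)x$ is measurable; (ii) $\Pi^s(\Theta_t\omega_\tau)\varphi(t,\omega_\tau)=\varphi(t,\omega_\tau)\Pi^s(\omega_\tau)$ for $t\in\mathbb T^+$; (iii) for $t\in\mathbb T^+$, $\varphi(t,\omega_\tau)$ maps $R(\Pi^u(\omega_\tau))$ isomorphically onto $R(\Pi^u(\Theta_t\omega_\tau))$; (iv) $\|\varphi(t,\omega_\tau)\Pi^s(\omega_\tau)\|\le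 K(\omega_\tau)e^{-\alpha(\omega_\tau)t}$ for $t\in\mathbb T^+$ and $\|\varphi(t,\omega_\tau)\Pi^u(\omega_\tau)\|\le K(\omega_\tau)e^{\alpha(\omega_\tau)t}$ for $t\in\mathbb T$, $t\le0$, where for $t<0$, $\varphi(t,\omega_\tau)\Pi^u(\omega_\tau)$ means the inverse of $\varphi(-t,\Theta_t\omega_\tau)|_{R(\Pi^u(\Theta_t\omega_\tau))}$ applied after $\Pi^u(\omega_\tau)$. It is called discrete if $\mathbb T=\mathbb Z$ and continuous if $\mathbb T=\mathbb R$. *)

theory Defs
  imports "HOL-Probability.Probability"
begin

(* Discrete setting: time set T = Z, nonnegative times T+ are represented by nat. *)

definition random_flow :: "'w measure \<Rightarrow> (int \<Rightarrow> 'w \<Rightarrow> 'w) \<Rightarrow> bool" where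
  "random_flow M \<theta> \<longleftrightarrow>
     (\<forall>t. \<theta> t \<in> M \<rightarrow>\<^sub>M M) \<and> \<theta> 0 = id \<and> (\<forall>t s. \<theta> (t + s) = \<theta> t \<circ> \<theta> s)"

definition Theta :: "(int \<Rightarrow> 'w \<Rightarrow> 'w) \<Rightarrow> int \<Rightarrow> int \<times> 'w \<Rightarrow> int \<times> 'w" where
  "Theta \<theta> t \<omega>\<tau> = (t + fst \<omega>\<tau>, \<theta> t (snd \<omega>\<tau>))"

definition Theta_invariant :: "(int \<Rightarrow> 'w \<Rightarrow> 'w) \<Rightarrow> (int \<times> 'w \<Rightarrow> 'b) \<Rightarrow> bool" where
  "Theta_invariant \<theta> D \<longleftrightarrow> (\<forall>t \<omega>\<tau>. D (Theta \<theta> t \<omega>\<tau>) = D \<omega>\<tau>)"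

definition theta_invariant_set :: "(int \<Rightarrow> 'w \<Rightarrow> 'w) \<Rightarrow> 'w set \<Rightarrow> bool" where
  "theta_invariant_set \<theta> S \<longleftrightarrow> (\<forall>t. \<theta> t ` S = S)"

definition linear_cocycle ::
  "'w measure \<Rightarrow> (int \<Rightarrow> 'w \<Rightarrow> 'w) \<Rightarrow> (nat \<Rightarrow> int \<times> 'w \<Rightarrow> ('x::banach \<Rightarrow>\<^sub>L 'x)) \<Rightarrow> bool" where
  "linear_cocycle M \<theta> \<phi> \<longleftrightarrow>
     (\<forall>\<tau>. (\<lambda>(t, \<omega>, x). blinfun_apply (\<phi> t (\<tau>, \<omega>)) x)
            \<in> borel_measurable (count_space UNIV \<Otimes>\<^sub>M M \<Otimes>\<^sub>M borel)) \<and>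
     (\<forall>\<omega>\<tau>. \<phi> 0 \<omega>\<tau> = id_blinfun) \<and>
     (\<forall>t s \<omega>\<tau>. \<phi> (t + s) \<omega>\<tau> = \<phi> t (Theta \<theta> (int s) \<omega>\<tau>) o\<^sub>L \<phi> s \<omega>\<tau>)"

fun gen_by :: "(int \<Rightarrow> 'w \<Rightarrow> 'w) \<Rightarrow> (int \<times> 'w \<Rightarrow> ('x::real_normed_vector \<Rightarrow>\<^sub>L 'x))
                \<Rightarrow> nat \<Rightarrow> int \<times> 'w \<Rightarrow> ('x \<Rightarrow>\<^sub>L 'x)" where
  "gen_by \<theta> A 0 \<omega>p = id_blinfun"
| "gen_by \<theta> A (Suc n) \<omega>p = A (Theta \<theta> (int n) \<omega>p) o\<^sub>L gen_by \<theta> A n \<omega>p"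

definition generated_by ::
  "(int \<Rightarrow> 'w \<Rightarrow> 'w) \<Rightarrow> (int \<times> 'w \<Rightarrow> ('x::real_normed_vector \<Rightarrow>\<^sub>L 'x))
     \<Rightarrow> (nat \<Rightarrow> int \<times> 'w \<Rightarrow> ('x \<Rightarrow>\<^sub>L 'x)) \<Rightarrow> bool" where
  "generated_by \<theta> A \<phi> \<longleftrightarrow> (\<forall>n \<omega>p. n \<ge> 1 \<longrightarrow> \<phi> n \<omega>p = gen_by \<theta> A n \<omega>p)"

definition iso_between :: "('x::real_normed_vector \<Rightarrow>\<^sub>L 'x) \<Rightarrow> 'x set \<Rightarrow> 'x set \<Rightarrow> bool" where
  "iso_between T U V \<longleftrightarrow> bij_betw (blinfun_apply T) U V \<and> continuous_on V (inv_into U (blinfun_apply T))"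

(* For t = -n < 0, phi(t,\<omega>p) Pi^u(\<omega>p) is the inverse of
  phi(n, Theta_(-n) \<omega>p) restricted to R(Pi^u(Theta_(-n) \<omega>p)), applied after Pi^u(\<omega>p);
  its operator-norm bound is written out pointwise. *)
definition exp_dichotomy ::
  "'w measure \<Rightarrow> (int \<Rightarrow> 'w \<Rightarrow> 'w) \<Rightarrow> (nat \<Rightarrow> int \<times> 'w \<Rightarrow> ('x::banach \<Rightarrow>\<^sub>L 'x))
    \<Rightarrow> (int \<times> 'w \<Rightarrow> real) \<Rightarrow> (int \<times> 'w \<Rightarrow> real) \<Rightarrow> 'w set
    \<Rightarrow> (int \<times> 'w \<Rightarrow> ('x \<Rightarrow>\<^sub>L 'x)) \<Rightarrow> bool" where
  "exp_dichotomy M \<theta> \<phi> K \<alpha> Om Pis \<longleftrightarrow>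
     theta_invariant_set \<theta> Om \<and> Om \<subseteq> space M \<and> Om \<in> sets M \<and> emeasure M Om = 1 \<and>
     Theta_invariant \<theta> K \<and> Theta_invariant \<theta> \<alpha> \<and> (\<forall>\<omega>\<tau>. K \<omega>\<tau> \<ge> 1 \<and> \<alpha> \<omega>\<tau> > 0) \<and>
     (\<forall>\<omega>\<tau>. snd \<omega>\<tau> \<in> Om \<longrightarrow> Pis \<omega>\<tau> o\<^sub>L Pis \<omega>\<tau> = Pis \<omega>\<tau>) \<and>
     (\<forall>\<tau> x. (\<lambda>\<omega>. blinfun_apply (Pis (\<tau>, \<omega>)) x) \<in> borel_measurable (restrict_space M Om)) \<and>
     (\<forall>\<omega>\<tau> t. snd \<omega>\<tau> \<in> Om \<longrightarrow>
        Pis (Theta \<theta> (int t) \<omega>\<tau>) o\<^sub>L \<phi> t \<omega>\<tau> = \<phi> t \<omega>\<tau> o\<^sub>L Pis \<omega>\<tau>) \<and>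
     (\<forall>\<omega>\<tau> t. snd \<omega>\<tau> \<in> Om \<longrightarrow>
        iso_between (\<phi> t \<omega>\<tau>) (range (blinfun_apply (id_blinfun - Pis \<omega>\<tau>)))
          (range (blinfun_apply (id_blinfun - Pis (Theta \<theta> (int t) \<omega>\<tau>))))) \<and>
     (\<forall>\<omega>\<tau> t. snd \<omega>\<tau> \<in> Om \<longrightarrow>
        norm (\<phi> t \<omega>\<tau> o\<^sub>L Pis \<omega>\<tau>) \<le> K \<omega>\<tau> * exp (- \<alpha> \<omega>\<tau> * real t)) \<and>
     (\<forall>\<omega>\<tau> n x. snd \<omega>\<tau> \<in> Om \<longrightarrow>
        norm (inv_into (range (blinfun_apply (id_blinfun - Pis (Theta \<theta> (- int n) \<omega>\<tau>))))
                 (blinfun_apply (\<phi> n (Theta \<theta> (- int n) \<omega>\<tau>)))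
                 (blinfun_apply (id_blinfun - Pis \<omega>\<tau>) x))
          \<le> K \<omega>\<tau> * exp (\<alpha> \<omega>\<tau> * (- real n)) * norm x)"

(* Backwards bounded solution of the evolution process psi_(n,m)(\<omega>p) = psi(n-m, Theta_m \<omega>p). *)
definition backwards_bounded_solution ::
  "(int \<Rightarrow> 'w \<Rightarrow> 'w) \<Rightarrow> (nat \<Rightarrow> int \<times> 'w \<Rightarrow> ('x::real_normed_vector \<Rightarrow>\<^sub>L 'x))
     \<Rightarrow> int \<times> 'w \<Rightarrow> 'x \<Rightarrow> (int \<Rightarrow> 'x) \<Rightarrow> bool" where
  "backwards_bounded_solution \<theta> \<psi> \<omega>p z \<xi> \<longleftrightarrow>
     \<xi> 0 = z \<and>
     (\<forall>m n. m \<le> n \<and> n \<le> 0 \<longrightarrow> \<xi> n = blinfun_apply (\<psi> (nat (n - m)) (Theta \<theta> m \<omega>p)) (\<xi> m)) \<and>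
     (\<exists>C. \<forall>n \<le> 0. norm (\<xi> n) \<le> C)"

definition Vplus :: "(nat \<Rightarrow> int \<times> 'w \<Rightarrow> ('x::real_normed_vector \<Rightarrow>\<^sub>L 'x)) \<Rightarrow> int \<times> 'w \<Rightarrow> 'x set" where
  "Vplus \<psi> \<omega>p = {z. \<exists>C. \<forall>n. norm (blinfun_apply (\<psi> n \<omega>p) z) \<le> C}"

definition Vminus :: "(int \<Rightarrow> 'w \<Rightarrow> 'w) \<Rightarrow> (nat \<Rightarrow> int \<times> 'w \<Rightarrow> ('x::real_normed_vector \<Rightarrow>\<^sub>L 'x))
     \<Rightarrow> int \<times> 'w \<Rightarrow> 'x set" where
  "Vminus \<theta> \<psi> \<omega>p = {z. \<exists>\<xi>. backwards_bounded_solution \<theta> \<psi> \<omega>p z \<xi>}"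

definition direct_sum :: "'x::real_vector set \<Rightarrow> 'x set \<Rightarrow> bool" where
  "direct_sum U V \<longleftrightarrow> U \<inter> V = {0} \<and> (\<forall>x. \<exists>u\<in>U. \<exists>v\<in>V. x = u + v)"

end

theory Submission
  imports Defs
begin

text \<open>
  Along a fixed orbit the cocycle becomes a sequence of operators \<open>A\<^sub>k\<close> with an exponential
  dichotomy, and its Green operator yields the unique bounded solution of
  \<open>x (n + 1) = A\<^sub>n x n + u n\<close>, of norm at most \<open>c \<parallel>u\<parallel>\<close> with \<open>c = K (1 + e\<^sup>-\<^sup>\<alpha>) / (1 - e\<^sup>-\<^sup>\<alpha>)\<close>.
  For \<open>\<parallel>B\<^sub>k\<parallel> \<le> \<delta> / K\<close> the map \<open>w \<mapsto> green (B w + f)\<close> contracts with constant \<open>\<delta> c / K = 1/2\<close>,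
  so the perturbed equation also has a unique bounded solution, depending linearly and
  boundedly on \<open>f\<close>. Let \<open>W z\<close> be the bounded solution forced by \<open>z\<close> at time \<open>-1\<close>: then
  \<open>W z 0 \<in> V\<^sup>+\<close> and \<open>z - W z 0 \<in> V\<^sup>-\<close>, while \<open>V\<^sup>+ \<inter> V\<^sup>- = 0\<close> because a vector in both lies on a
  bounded solution over all of \<open>\<int>\<close>. Hence \<open>z \<mapsto> W z 0\<close> is a bounded projection onto \<open>V\<^sup>+\<close>
  along \<open>V\<^sup>-\<close>, which gives closedness and the splitting. The evolution maps \<open>V\<^sup>-\<close> onto
  \<open>V\<^sup>-\<close> of the shifted orbit, injectively since \<open>V\<^sup>+ \<inter> V\<^sup>- = 0\<close>, and its inverse is read
  off the backward part of \<open>W\<close> for the shifted orbit, hence continuous.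
\<close>

section \<open>Geometric estimates and contractions on bounded sequences\<close>

lemma norm_eq_zero_of_geometric_le:
  fixes v :: "'x::real_normed_vector"
  assumes "\<And>t::nat. norm v \<le> C * q ^ t" "0 \<le> q" "q < 1"
  shows "v = 0"
proof -
  have "(\<lambda>t. C * q ^ t) \<longlonglongrightarrow> C * 0"
    by (intro tendsto_mult tendsto_const LIMSEQ_power_zero) (use assms in auto)
  then have "norm v \<le> 0" using assms(1) by (intro LIMSEQ_le_const[of "\<lambda>t. C * q ^ t"]) auto
  then show ?thesis by simp
qed

lemma geometric_dominated_summable:
  fixes f :: "nat \<Rightarrow> 'x::banach"
  assumes q: "0 \<le> q" "q < 1" and f: "\<And>j. norm (f j) \<le> C * q ^ j"
  shows "summable f" and "norm (suminf f) \<le> C / (1 - q)"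
proof -
  have nq: "norm q < 1" using q by simp
  have geo: "summable (\<lambda>j. C * q ^ j)" by (rule summable_mult[OF summable_geometric[OF nq]])
  show "summable f"
    by (rule summable_norm_cancel, rule summable_norm_comparison_test[OF _ geo]) (use f in blast)
  have "norm (suminf f) \<le> (\<Sum>j. C * q ^ j)" by (rule norm_suminf_le[OF f geo])
  also have "\<dots> = C / (1 - q)"
    by (simp only: suminf_mult[OF summable_geometric[OF nq]] suminf_geometric[OF nq]) simp
  finally show "norm (suminf f) \<le> C / (1 - q)" .
qed

lemma norm_le_of_contracting_self_bound:
  fixes w :: "'a \<Rightarrow> 'x::real_normed_vector"
  assumes w: "bounded (range w)" and q: "0 \<le> q" "q < 1"
    and self_bound: "\<And>M n. (\<And>k. norm (w k) \<le> M) \<Longrightarrow> norm (w n) \<le> q * M + F"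
  shows "norm (w n) \<le> F / (1 - q)"
proof -
  define S where "S = (SUP k. norm (w k))"
  have bdd: "bdd_above (range (\<lambda>k. norm (w k)))"
    using w by (auto simp: bounded_iff bdd_above_def)
  have le_S: "norm (w k) \<le> S" for k unfolding S_def by (rule cSUP_upper[OF UNIV_I bdd])
  have "S \<le> q * S + F"
    using self_bound[OF le_S] unfolding S_def by (intro cSUP_least) auto
  then have "S \<le> F / (1 - q)" using q by (simp add: pos_le_divide_eq algebra_simps)
  then show ?thesis using le_S order_trans by blast
qed

text \<open>Banach's fixed point theorem in the space of bounded functions with the sup distance.\<close>
lemma bounded_seq_contraction_fixpoint:
  fixes T :: "(int \<Rightarrow> 'x::banach) \<Rightarrow> int \<Rightarrow> 'x"
  assumes q: "0 \<le> q" "q < 1"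
    and T_bounded: "\<And>u. bounded (range u) \<Longrightarrow> bounded (range (T u))"
    and T_contr: "\<And>u v M n. bounded (range u) \<Longrightarrow> bounded (range v) \<Longrightarrow>
        (\<And>k. norm (u k - v k) \<le> M) \<Longrightarrow> norm (T u n - T v n) \<le> q * M"
  shows "\<exists>!w. bounded (range w) \<and> T w = w"
proof -
  interpret F: Metric_space "Met_TC.fspace UNIV :: (int \<Rightarrow> 'x) set" "Met_TC.fdist UNIV"
    by (rule Met_TC.Metric_space_funspace)
  have fspace_iff: "w \<in> Met_TC.fspace UNIV \<longleftrightarrow> bounded (range w)" for w :: "int \<Rightarrow> 'x"
    by (simp add: Met_TC.fspace_def)
  have fdist_le: "Met_TC.fdist UNIV u v \<le> M \<longleftrightarrow> (\<forall>k. norm (u k - v k) \<le> M)"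
    if "bounded (range u)" "bounded (range v)" for u v :: "int \<Rightarrow> 'x" and M
    using that by (simp add: Met_TC.funspace_mdist_le fspace_iff dist_norm)
  have "mcomplete_of (funspace (UNIV :: int set) (Met_TC.Self :: 'x metric))"
    by (rule Met_TC.mcomplete_funspace) (simp add: complete_UNIV)
  then have complete: "F.mcomplete" by (simp add: funspace_def F.mcomplete_of)
  have maps: "T \<in> Met_TC.fspace UNIV \<rightarrow> Met_TC.fspace UNIV"
    using T_bounded by (simp add: fspace_iff)
  have contr: "Met_TC.fdist UNIV (T u) (T v) \<le> q * Met_TC.fdist UNIV u v"
    if "u \<in> Met_TC.fspace UNIV" "v \<in> Met_TC.fspace UNIV" for u v
  proof -
    have bounded: "bounded (range u)" "bounded (range v)" using that by (simp_all add: fspace_iff)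
    have "\<forall>k. norm (u k - v k) \<le> Met_TC.fdist UNIV u v"
      using fdist_le[OF bounded] by blast
    then show ?thesis
      using fdist_le[OF T_bounded T_bounded, OF bounded] T_contr[OF bounded] by blast
  qed
  have "(\<lambda>_. 0 :: 'x) \<in> Met_TC.fspace (UNIV :: int set)" by (simp add: fspace_iff)
  then obtain w where w: "w \<in> Met_TC.fspace UNIV" "T w = w"
    using F.Banach_fixedpoint_thm[OF complete _ maps q(2) contr] by blast
  show ?thesis
  proof (rule ex1I[of _ w])
    show "bounded (range w) \<and> T w = w" using w by (simp add: fspace_iff)
  next
    fix v assume "bounded (range v) \<and> T v = v"
    then show "v = w"
      using F.contraction_imp_unique_fixpoint[OF _ w(2) maps q(2) contr _ w(1)]
      by (simp add: fspace_iff)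
  qed
qed

section \<open>Evolution operators of operator sequences\<close>

fun evolution :: "(int \<Rightarrow> 'x::real_normed_vector \<Rightarrow>\<^sub>L 'x) \<Rightarrow> int \<Rightarrow> nat \<Rightarrow> 'x \<Rightarrow>\<^sub>L 'x" where
  "evolution A m 0 = id_blinfun"
| "evolution A m (Suc t) = A (m + int t) o\<^sub>L evolution A m t"

lemma evolution_add: "evolution A m (t + s) = evolution A (m + int s) t o\<^sub>L evolution A m s"
proof (induction t)
  case (Suc t)
  show ?case
    by (rule blinfun_eqI) (simp add: Suc[unfolded add.commute[of t]] add.commute add.left_commute)
qed (rule blinfun_eqI, simp)

lemma evolution_add_apply:
  "blinfun_apply (evolution A m (t + s)) x
     = blinfun_apply (evolution A (m + int s) t) (blinfun_apply (evolution A m s) x)"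
  by (simp add: evolution_add)

lemma evolution_shift: "evolution (\<lambda>k. A (k + s)) m t = evolution A (m + s) t"
  by (induction t) (simp_all add: ac_simps)

lemma solution_eq_evolution:
  assumes "\<And>k. m \<le> k \<Longrightarrow> k < m + int t \<Longrightarrow> \<xi> (k + 1) = blinfun_apply (A k) (\<xi> k)"
  shows "\<xi> (m + int t) = blinfun_apply (evolution A m t) (\<xi> m)"
  using assms
proof (induction t)
  case (Suc t)
  have "\<xi> (m + int (Suc t)) = \<xi> ((m + int t) + 1)" by (simp add: algebra_simps)
  also have "\<dots> = blinfun_apply (A (m + int t)) (\<xi> (m + int t))" by (rule Suc.prems) auto
  also have "\<xi> (m + int t) = blinfun_apply (evolution A m t) (\<xi> m)"
    by (rule Suc.IH) (rule Suc.prems, auto)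
  finally show ?case by simp
qed simp

section \<open>Exponential dichotomies and the Green operator\<close>

locale discrete_dichotomy =
  fixes A :: "int \<Rightarrow> 'x::banach \<Rightarrow>\<^sub>L 'x" and P :: "int \<Rightarrow> 'x \<Rightarrow>\<^sub>L 'x" and K a :: real
  assumes K_ge_1: "K \<ge> 1" and a_pos: "a > 0"
    and P_idem: "\<And>m. P m o\<^sub>L P m = P m"
    and P_evolution: "\<And>m t. P (m + int t) o\<^sub>L evolution A m t = evolution A m t o\<^sub>L P m"
    and unstable_bij: "\<And>m t. bij_betw (blinfun_apply (evolution A m t))
        (range (blinfun_apply (id_blinfun - P m))) (range (blinfun_apply (id_blinfun - P (m + int t))))"
    and stable_bound: "\<And>m t. norm (evolution A m t o\<^sub>L P m) \<le> K * exp (- a * real t)"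
    and unstable_bound: "\<And>m t x. norm (inv_into (range (blinfun_apply (id_blinfun - P m)))
        (blinfun_apply (evolution A m t)) (blinfun_apply (id_blinfun - P (m + int t)) x))
          \<le> K * exp (- a * real t) * norm x"
begin

abbreviation Ps :: "int \<Rightarrow> 'x \<Rightarrow> 'x" where "Ps m \<equiv> blinfun_apply (P m)"
abbreviation Pu :: "int \<Rightarrow> 'x \<Rightarrow> 'x" where "Pu m \<equiv> blinfun_apply (id_blinfun - P m)"
abbreviation E :: "int \<Rightarrow> nat \<Rightarrow> 'x \<Rightarrow> 'x" where "E m t \<equiv> blinfun_apply (evolution A m t)"

lemma Ps_Ps: "Ps m (Ps m x) = Ps m x"
  using P_idem[of m] by (metis blinfun_apply_blinfun_compose)

lemma Pu_eq: "Pu m x = x - Ps m x"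
  by (simp add: minus_blinfun.rep_eq)

lemma Ps_add_Pu: "Ps m x + Pu m x = x"
  by (simp add: Pu_eq)

lemma Pu_Pu: "Pu m (Pu m x) = Pu m x"
  by (simp add: Pu_eq blinfun.diff_right Ps_Ps)

lemma range_Pu_iff: "y \<in> range (Pu m) \<longleftrightarrow> Pu m y = y"
  by (metis Pu_Pu rangeE rangeI)

lemma Ps_evolution: "Ps (m + int t) (E m t x) = E m t (Ps m x)"
  using P_evolution[of m t] by (metis blinfun_apply_blinfun_compose)

lemma Pu_evolution: "Pu (m + int t) (E m t x) = E m t (Pu m x)"
  by (simp add: Pu_eq Ps_evolution blinfun.diff_right)

definition q :: real where "q = exp (- a)"

lemma q_bounds: "0 \<le> q" "q < 1"
  using a_pos by (simp_all add: q_def)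

lemma exp_eq_q_power: "exp (- a * real t) = q ^ t"
  unfolding q_def by (metis exp_of_nat_mult mult.commute)

lemma stable_evolution_norm_le: "norm (E m t (Ps m x)) \<le> K * q ^ t * norm x"
  using norm_blinfun[of "evolution A m t o\<^sub>L P m" x] stable_bound[of m t, unfolded exp_eq_q_power]
  by (simp add: mult_right_mono order_trans)

definition unstable_inv :: "int \<Rightarrow> nat \<Rightarrow> 'x \<Rightarrow> 'x" where
  "unstable_inv m t x = inv_into (range (Pu m)) (E m t) (Pu (m + int t) x)"

lemma unstable_inv_range: "unstable_inv m t x \<in> range (Pu m)"
  and evolution_unstable_inv: "E m t (unstable_inv m t x) = Pu (m + int t) x"
proof -
  have "Pu (m + int t) x \<in> E m t ` range (Pu m)"
    using unstable_bij[of m t] by (auto simp: bij_betw_def)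
  then show "unstable_inv m t x \<in> range (Pu m)" "E m t (unstable_inv m t x) = Pu (m + int t) x"
    unfolding unstable_inv_def by (auto intro: inv_into_into f_inv_into_f)
qed

lemma unstable_inv_unique:
  assumes "y \<in> range (Pu m)" "E m t y = Pu (m + int t) x"
  shows "unstable_inv m t x = y"
  using unstable_bij[of m t] unstable_inv_range evolution_unstable_inv assms
  by (metis bij_betw_imp_inj_on inj_on_def)

lemma unstable_inv_norm_le: "norm (unstable_inv m t x) \<le> K * q ^ t * norm x"
  using unstable_bound[of m t x, unfolded exp_eq_q_power] by (simp add: unstable_inv_def)

lemma unstable_inv_0: "unstable_inv m 0 x = Pu m x"
  by (rule unstable_inv_unique) (auto simp: Pu_Pu)

lemma A_unstable_inv: "blinfun_apply (A m) (unstable_inv m (Suc t) x) = unstable_inv (m + 1) t x"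
proof -
  let ?y = "unstable_inv m (Suc t) x"
  have "Pu m ?y = ?y" using unstable_inv_range range_Pu_iff by blast
  then have "Pu (m + 1) (blinfun_apply (A m) ?y) = blinfun_apply (A m) ?y"
    using Pu_evolution[of m 1 ?y] by simp
  then have in_range: "blinfun_apply (A m) ?y \<in> range (Pu (m + 1))" by (metis rangeI)
  have "E (m + 1) t (blinfun_apply (A m) ?y) = E m (t + 1) ?y"
    using evolution_add_apply[of A m t 1 ?y] by simp
  also have "\<dots> = Pu (m + 1 + int t) x"
    using evolution_unstable_inv[of m "Suc t" x] by (simp add: add.assoc)
  finally show ?thesis by (intro unstable_inv_unique[symmetric] in_range) simp
qed

lemma unstable_inv_diff: "unstable_inv m t (x - y) = unstable_inv m t x - unstable_inv m t y"
proof (rule unstable_inv_unique)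
  show "unstable_inv m t x - unstable_inv m t y \<in> range (Pu m)"
    using unstable_inv_range range_Pu_iff by (metis blinfun.diff_right)
qed (simp add: blinfun.diff_right evolution_unstable_inv)

text \<open>Green's formula
  \<open>x n = (\<Sum>k<n. \<Phi>(n,k+1) (Ps (k+1) (u k))) - (\<Sum>k\<ge>n. \<Phi>(k+1,n)\<inverse> (Pu (k+1) (u k)))\<close>,
  where \<open>\<Phi>(n,m) = evolution A m (n - m)\<close>, with both sums indexed by the distance \<open>j\<close> from \<open>n\<close>.\<close>
definition green_past :: "(int \<Rightarrow> 'x) \<Rightarrow> int \<Rightarrow> nat \<Rightarrow> 'x" where
  "green_past u n j = E (n - int j) j (Ps (n - int j) (u (n - int j - 1)))"

definition green_future :: "(int \<Rightarrow> 'x) \<Rightarrow> int \<Rightarrow> nat \<Rightarrow> 'x" where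
  "green_future u n j = unstable_inv n (Suc j) (u (n + int j))"

definition green :: "(int \<Rightarrow> 'x) \<Rightarrow> int \<Rightarrow> 'x" where
  "green u n = suminf (green_past u n) - suminf (green_future u n)"

definition green_const :: real where "green_const = K * (1 + q) / (1 - q)"

lemma green_const_pos: "green_const > 0"
  using q_bounds K_ge_1 by (auto simp: green_const_def)

lemma green_past_norm_le:
  assumes "\<And>k. norm (u k) \<le> M" shows "norm (green_past u n j) \<le> K * M * q ^ j"
proof -
  have "norm (green_past u n j) \<le> K * q ^ j * norm (u (n - int j - 1))"
    unfolding green_past_def by (rule stable_evolution_norm_le)
  also have "\<dots> \<le> K * q ^ j * M" using assms K_ge_1 q_bounds by (intro mult_left_mono) auto
  finally show ?thesis by (simp add: algebra_simps)
qed

lemma green_future_norm_le: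
  assumes "\<And>k. norm (u k) \<le> M" shows "norm (green_future u n j) \<le> K * M * q * q ^ j"
proof -
  have "norm (green_future u n j) \<le> K * q ^ Suc j * norm (u (n + int j))"
    unfolding green_future_def by (rule unstable_inv_norm_le)
  also have "\<dots> \<le> K * q ^ Suc j * M" using assms K_ge_1 q_bounds by (intro mult_left_mono) auto
  finally show ?thesis by (simp add: algebra_simps)
qed

lemma summable_green_past:
  assumes "bounded (range u)" shows "summable (green_past u n)"
proof -
  obtain M where "\<And>k. norm (u k) \<le> M" using assms by (auto simp: bounded_iff)
  then show ?thesis by (rule geometric_dominated_summable(1)[OF q_bounds green_past_norm_le])
qed

lemma summable_green_future:
  assumes "bounded (range u)" shows "summable (green_future u n)"
proof -
  obtain M where "\<And>k. norm (u k) \<le> M" using assms by (auto simp: bounded_iff)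
  then show ?thesis by (rule geometric_dominated_summable(1)[OF q_bounds green_future_norm_le])
qed

lemma green_norm_le:
  assumes "\<And>k. norm (u k) \<le> M" shows "norm (green u n) \<le> green_const * M"
proof -
  have "norm (suminf (green_past u n)) \<le> K * M / (1 - q)"
    by (rule geometric_dominated_summable(2)[OF q_bounds green_past_norm_le[OF assms]])
  moreover have "norm (suminf (green_future u n)) \<le> K * M * q / (1 - q)"
    by (rule geometric_dominated_summable(2)[OF q_bounds green_future_norm_le[OF assms]])
  ultimately have "norm (green u n) \<le> K * M / (1 - q) + K * M * q / (1 - q)"
    unfolding green_def by (smt (verit) norm_triangle_ineq4)
  also have "\<dots> = green_const * M" by (simp add: green_const_def add_divide_distrib algebra_simps)
  finally show ?thesis .
qed

lemma bounded_green: "bounded (range u) \<Longrightarrow> bounded (range (green u))"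
  by (auto simp: bounded_iff intro: green_norm_le)

lemma green_diff:
  assumes "bounded (range u)" "bounded (range v)"
  shows "green (\<lambda>k. u k - v k) n = green u n - green v n"
proof -
  have "green_past (\<lambda>k. u k - v k) n = (\<lambda>j. green_past u n j - green_past v n j)"
    by (auto simp: green_past_def blinfun.diff_right)
  moreover have "green_future (\<lambda>k. u k - v k) n = (\<lambda>j. green_future u n j - green_future v n j)"
    by (auto simp: green_future_def unstable_inv_diff)
  ultimately show ?thesis
    unfolding green_def
    using suminf_diff[OF summable_green_past[OF assms(1)] summable_green_past[OF assms(2)]]
      suminf_diff[OF summable_green_future[OF assms(1)] summable_green_future[OF assms(2)]]
    by (simp add: algebra_simps)
qed

lemma A_green_past:
  assumes "bounded (range u)"
  shows "suminf (green_past u (n + 1)) = blinfun_apply (A n) (suminf (green_past u n)) + Ps (n + 1) (u n)"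
proof -
  have "blinfun_apply (A n) (suminf (green_past u n)) = (\<Sum>j. blinfun_apply (A n) (green_past u n j))"
    by (rule bounded_linear.suminf[OF blinfun.bounded_linear_right summable_green_past[OF assms]])
  also have "(\<lambda>j. blinfun_apply (A n) (green_past u n j)) = (\<lambda>j. green_past u (n + 1) (Suc j))"
  proof
    fix j
    have "n + 1 - int (Suc j) = n - int j" by simp
    then show "blinfun_apply (A n) (green_past u n j) = green_past u (n + 1) (Suc j)"
      unfolding green_past_def by simp
  qed
  also have "(\<Sum>j. green_past u (n + 1) (Suc j)) = suminf (green_past u (n + 1)) - green_past u (n + 1) 0"
    by (rule suminf_split_head[OF summable_green_past[OF assms]])
  also have "green_past u (n + 1) 0 = Ps (n + 1) (u n)" by (simp add: green_past_def)
  finally show ?thesis by (simp add: algebra_simps)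
qed

lemma A_green_future:
  assumes "bounded (range u)"
  shows "suminf (green_future u (n + 1)) = blinfun_apply (A n) (suminf (green_future u n)) - Pu (n + 1) (u n)"
proof -
  define f where "f j = unstable_inv (n + 1) j (u (n + int j))" for j
  obtain M where M: "\<And>k. norm (u k) \<le> M" using assms by (auto simp: bounded_iff)
  have "norm (f j) \<le> K * M * q ^ j" for j
  proof -
    have "norm (f j) \<le> K * q ^ j * norm (u (n + int j))"
      unfolding f_def by (rule unstable_inv_norm_le)
    also have "\<dots> \<le> K * q ^ j * M" using M K_ge_1 q_bounds by (intro mult_left_mono) auto
    finally show ?thesis by (simp add: algebra_simps)
  qed
  then have "summable f" by (rule geometric_dominated_summable(1)[OF q_bounds])
  have "blinfun_apply (A n) (suminf (green_future u n)) = (\<Sum>j. blinfun_apply (A n) (green_future u n j))"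
    by (rule bounded_linear.suminf[OF blinfun.bounded_linear_right summable_green_future[OF assms]])
  also have "(\<lambda>j. blinfun_apply (A n) (green_future u n j)) = f"
    by (auto simp: green_future_def f_def A_unstable_inv)
  also have "suminf f = f 0 + (\<Sum>j. f (Suc j))" using suminf_split_head[OF \<open>summable f\<close>] by simp
  also have "(\<lambda>j. f (Suc j)) = green_future u (n + 1)"
    by (auto simp: f_def green_future_def add.commute add.left_commute)
  also have "f 0 = Pu (n + 1) (u n)" by (simp add: f_def unstable_inv_0)
  finally show ?thesis by (simp add: algebra_simps)
qed

lemma green_Suc:
  assumes "bounded (range u)"
  shows "green u (n + 1) = blinfun_apply (A n) (green u n) + u n"
proof -
  have "green u (n + 1) = blinfun_apply (A n) (suminf (green_past u n)) + Ps (n + 1) (u n)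
      - (blinfun_apply (A n) (suminf (green_future u n)) - Pu (n + 1) (u n))"
    unfolding green_def A_green_past[OF assms] A_green_future[OF assms] ..
  also have "\<dots> = blinfun_apply (A n) (green u n) + (Ps (n + 1) (u n) + Pu (n + 1) (u n))"
    by (simp add: green_def blinfun.diff_right algebra_simps)
  finally show ?thesis by (simp only: Ps_add_Pu)
qed

text \<open>For every \<open>t\<close> the stable part of \<open>x n\<close> is bounded via \<open>x (n - t)\<close> and the unstable part
  via \<open>x (n + t)\<close>, both with the factor \<open>K q\<^sup>t\<close>.\<close>
lemma bounded_homogeneous_solution_eq_0:
  assumes "bounded (range x)" and x_Suc: "\<And>n. x (n + 1) = blinfun_apply (A n) (x n)"
  shows "x n = 0"
proof -
  obtain M where M: "\<And>k. norm (x k) \<le> M" using assms(1) by (auto simp: bounded_iff)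
  have x_evolution: "x (m + int t) = E m t (x m)" for m t
    by (rule solution_eq_evolution) (simp add: x_Suc)
  have "Ps n (x n) = 0"
  proof (rule norm_eq_zero_of_geometric_le[OF _ q_bounds])
    fix t
    have "Ps n (x n) = E (n - int t) t (Ps (n - int t) (x (n - int t)))"
      using x_evolution[of "n - int t" t] Ps_evolution[of "n - int t" t] by simp
    then have "norm (Ps n (x n)) \<le> K * q ^ t * norm (x (n - int t))"
      by (simp add: stable_evolution_norm_le)
    also have "\<dots> \<le> K * q ^ t * M" using M K_ge_1 q_bounds by (intro mult_left_mono) auto
    finally show "norm (Ps n (x n)) \<le> K * M * q ^ t" by (simp add: algebra_simps)
  qed
  moreover have "Pu n (x n) = 0"
  proof (rule norm_eq_zero_of_geometric_le[OF _ q_bounds])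
    fix t
    have "unstable_inv n t (x (n + int t)) = Pu n (x n)"
      by (rule unstable_inv_unique) (simp_all add: x_evolution Pu_evolution)
    then have "norm (Pu n (x n)) \<le> K * q ^ t * norm (x (n + int t))"
      by (metis unstable_inv_norm_le)
    also have "\<dots> \<le> K * q ^ t * M" using M K_ge_1 q_bounds by (intro mult_left_mono) auto
    finally show "norm (Pu n (x n)) \<le> K * M * q ^ t" by (simp add: algebra_simps)
  qed
  ultimately show ?thesis using Ps_add_Pu[of n "x n"] by simp
qed

lemma bounded_solution_eq_green:
  assumes "bounded (range x)" "bounded (range u)"
    and x_Suc: "\<And>n. x (n + 1) = blinfun_apply (A n) (x n) + u n"
  shows "x = green u"
proof
  fix n
  have "x n - green u n = 0"
  proof (rule bounded_homogeneous_solution_eq_0)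
    show "bounded (range (\<lambda>n. x n - green u n))"
      using assms(1) bounded_green[OF assms(2)] by (rule bounded_minus_comp)
  qed (simp add: x_Suc green_Suc[OF assms(2)] blinfun.diff_right)
  then show "x n = green u n" by simp
qed

end

section \<open>Forward and backward bounded orbits\<close>

definition seq_Vplus :: "(int \<Rightarrow> 'x::real_normed_vector \<Rightarrow>\<^sub>L 'x) \<Rightarrow> 'x set" where
  "seq_Vplus C = {z. \<exists>M. \<forall>t. norm (blinfun_apply (evolution C 0 t) z) \<le> M}"

definition seq_backwards_bounded_solution ::
  "(int \<Rightarrow> 'x::real_normed_vector \<Rightarrow>\<^sub>L 'x) \<Rightarrow> 'x \<Rightarrow> (int \<Rightarrow> 'x) \<Rightarrow> bool" where
  "seq_backwards_bounded_solution C z \<xi> \<longleftrightarrow>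
     \<xi> 0 = z \<and> (\<forall>k<0. \<xi> (k + 1) = blinfun_apply (C k) (\<xi> k)) \<and> (\<exists>M. \<forall>k\<le>0. norm (\<xi> k) \<le> M)"

definition seq_Vminus :: "(int \<Rightarrow> 'x::real_normed_vector \<Rightarrow>\<^sub>L 'x) \<Rightarrow> 'x set" where
  "seq_Vminus C = {z. \<exists>\<xi>. seq_backwards_bounded_solution C z \<xi>}"

lemma subspace_seq_Vplus: "subspace (seq_Vplus C)"
proof (rule subspaceI)
  fix x y assume "x \<in> seq_Vplus C" "y \<in> seq_Vplus C"
  then obtain M N where "\<And>t. norm (blinfun_apply (evolution C 0 t) x) \<le> M"
    and "\<And>t. norm (blinfun_apply (evolution C 0 t) y) \<le> N"
    by (auto simp: seq_Vplus_def)
  then have "norm (blinfun_apply (evolution C 0 t) (x + y)) \<le> M + N" for t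
    by (smt (verit) blinfun.add_right norm_triangle_ineq)
  then show "x + y \<in> seq_Vplus C" by (auto simp: seq_Vplus_def)
next
  fix c x assume "x \<in> seq_Vplus C"
  then obtain M where M: "\<And>t. norm (blinfun_apply (evolution C 0 t) x) \<le> M"
    by (auto simp: seq_Vplus_def)
  have "norm (blinfun_apply (evolution C 0 t) (c *\<^sub>R x)) \<le> \<bar>c\<bar> * M" for t
    using mult_left_mono[OF M[of t] abs_ge_zero[of c]] by (simp add: blinfun.scaleR_right)
  then show "c *\<^sub>R x \<in> seq_Vplus C" by (auto simp: seq_Vplus_def)
qed (auto simp: seq_Vplus_def)

lemma subspace_seq_Vminus: "subspace (seq_Vminus C)"
proof (rule subspaceI)
  have "seq_backwards_bounded_solution C 0 (\<lambda>_. 0)"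
    by (auto simp: seq_backwards_bounded_solution_def)
  then show "0 \<in> seq_Vminus C" by (auto simp: seq_Vminus_def)
next
  fix x y assume "x \<in> seq_Vminus C" "y \<in> seq_Vminus C"
  then obtain \<xi> \<eta> where "seq_backwards_bounded_solution C x \<xi>" "seq_backwards_bounded_solution C y \<eta>"
    by (auto simp: seq_Vminus_def)
  moreover from this obtain M N where "\<And>k. k \<le> 0 \<Longrightarrow> norm (\<xi> k) \<le> M" "\<And>k. k \<le> 0 \<Longrightarrow> norm (\<eta> k) \<le> N"
    unfolding seq_backwards_bounded_solution_def by blast
  ultimately have \<xi>: "seq_backwards_bounded_solution C x \<xi>" "\<And>k. k \<le> 0 \<Longrightarrow> norm (\<xi> k) \<le> M"
    and \<eta>: "seq_backwards_bounded_solution C y \<eta>" "\<And>k. k \<le> 0 \<Longrightarrow> norm (\<eta> k) \<le> N"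
    by blast+
  have "norm (\<xi> k + \<eta> k) \<le> M + N" if "k \<le> 0" for k
    using norm_triangle_ineq[of "\<xi> k" "\<eta> k"] \<xi>(2)[OF that] \<eta>(2)[OF that] by linarith
  then have "seq_backwards_bounded_solution C (x + y) (\<lambda>k. \<xi> k + \<eta> k)"
    using \<xi>(1) \<eta>(1) by (auto simp: seq_backwards_bounded_solution_def blinfun.add_right)
  then show "x + y \<in> seq_Vminus C" by (auto simp: seq_Vminus_def)
next
  fix c x assume "x \<in> seq_Vminus C"
  then obtain \<xi> where "seq_backwards_bounded_solution C x \<xi>" by (auto simp: seq_Vminus_def)
  moreover from this obtain M where "\<And>k. k \<le> 0 \<Longrightarrow> norm (\<xi> k) \<le> M"
    unfolding seq_backwards_bounded_solution_def by blast
  ultimately have \<xi>: "seq_backwards_bounded_solution C x \<xi>" "\<And>k. k \<le> 0 \<Longrightarrow> norm (\<xi> k) \<le> M"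
    by blast+
  have "norm (c *\<^sub>R \<xi> k) \<le> \<bar>c\<bar> * M" if "k \<le> 0" for k
    using mult_left_mono[OF \<xi>(2)[OF that] abs_ge_zero[of c]] by simp
  then have "seq_backwards_bounded_solution C (c *\<^sub>R x) (\<lambda>k. c *\<^sub>R \<xi> k)"
    using \<xi>(1) by (auto simp: seq_backwards_bounded_solution_def blinfun.scaleR_right)
  then show "c *\<^sub>R x \<in> seq_Vminus C" by (auto simp: seq_Vminus_def)
qed

lemma finite_segment_norm_bound: "\<exists>S. \<forall>t\<le>(n::nat). norm (g t :: 'x::real_normed_vector) \<le> S"
  by (meson atMost_iff finite_atMost finite_imageI finite_imp_bounded image_eqI bounded_iff)

lemma evolution_image_seq_Vplus:
  "blinfun_apply (evolution C 0 n) ` seq_Vplus C \<subseteq> seq_Vplus (\<lambda>k. C (k + int n))"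
proof
  fix y assume "y \<in> blinfun_apply (evolution C 0 n) ` seq_Vplus C"
  then obtain z M where y: "y = blinfun_apply (evolution C 0 n) z"
    and M: "\<And>t. norm (blinfun_apply (evolution C 0 t) z) \<le> M"
    by (auto simp: seq_Vplus_def)
  have "blinfun_apply (evolution (\<lambda>k. C (k + int n)) 0 t) y = blinfun_apply (evolution C 0 (t + n)) z" for t
    by (simp add: y evolution_shift evolution_add_apply)
  then show "y \<in> seq_Vplus (\<lambda>k. C (k + int n))" using M by (auto simp: seq_Vplus_def)
qed

text \<open>A backward solution through \<open>z\<close> is continued by the forward orbit of \<open>z\<close> up to time \<open>n\<close>.\<close>
lemma evolution_in_seq_Vminus:
  assumes "z \<in> seq_Vminus C"
  shows "blinfun_apply (evolution C 0 n) z \<in> seq_Vminus (\<lambda>k. C (k + int n))"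
proof -
  obtain \<xi> where "seq_backwards_bounded_solution C z \<xi>" using assms by (auto simp: seq_Vminus_def)
  then obtain M where \<xi>0: "\<xi> 0 = z" and \<xi>_Suc: "\<And>k. k < 0 \<Longrightarrow> \<xi> (k + 1) = blinfun_apply (C k) (\<xi> k)"
    and M: "\<And>k. k \<le> 0 \<Longrightarrow> norm (\<xi> k) \<le> M"
    unfolding seq_backwards_bounded_solution_def by blast
  obtain S where S: "\<And>t. t \<le> n \<Longrightarrow> norm (blinfun_apply (evolution C 0 t) z) \<le> S"
    using finite_segment_norm_bound[of n "\<lambda>t. blinfun_apply (evolution C 0 t) z"] by blast
  define \<eta> where "\<eta> k = (if k \<le> 0 then \<xi> k else blinfun_apply (evolution C 0 (nat k)) z)" for k
  have \<eta>_Suc: "\<eta> (k + 1) = blinfun_apply (C k) (\<eta> k)" if "k < int n" for k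
  proof (cases "k < 0")
    case True then show ?thesis using \<xi>_Suc[OF True] by (simp add: \<eta>_def)
  next
    case False
    then have "nat (k + 1) = Suc (nat k)" by simp
    then show ?thesis using False \<xi>0 by (simp add: \<eta>_def)
  qed
  have "seq_backwards_bounded_solution (\<lambda>k. C (k + int n)) (blinfun_apply (evolution C 0 n) z)
      (\<lambda>k. \<eta> (k + int n))"
    unfolding seq_backwards_bounded_solution_def
  proof (intro conjI allI impI)
    show "\<eta> (0 + int n) = blinfun_apply (evolution C 0 n) z"
      using \<xi>0 by (simp add: \<eta>_def)
    show "\<eta> (k + 1 + int n) = blinfun_apply (C (k + int n)) (\<eta> (k + int n))" if "k < 0" for k
      using \<eta>_Suc[of "k + int n"] that by (simp add: algebra_simps)
    have "norm (\<eta> k) \<le> \<bar>M\<bar> + \<bar>S\<bar>" if "k \<le> int n" for k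
    proof (cases "k \<le> 0")
      case True then show ?thesis using M[OF True] by (simp add: \<eta>_def)
    next
      case False
      then have "norm (\<eta> k) \<le> S" using S[of "nat k"] that by (simp add: \<eta>_def)
      then show ?thesis by linarith
    qed
    then show "\<exists>M. \<forall>k\<le>0. norm (\<eta> (k + int n)) \<le> M" by (intro exI[of _ "\<bar>M\<bar> + \<bar>S\<bar>"]) simp
  qed
  then show ?thesis by (auto simp: seq_Vminus_def)
qed

lemma seq_Vminus_of_shifted_solution:
  assumes "seq_backwards_bounded_solution (\<lambda>k. C (k + int n)) z \<eta>"
  shows "\<eta> (- int n) \<in> seq_Vminus C" and "blinfun_apply (evolution C 0 n) (\<eta> (- int n)) = z"
proof -
  obtain M where \<eta>0: "\<eta> 0 = z" and \<eta>_Suc: "\<And>k. k < 0 \<Longrightarrow> \<eta> (k + 1) = blinfun_apply (C (k + int n)) (\<eta> k)"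
    and M: "\<And>k. k \<le> 0 \<Longrightarrow> norm (\<eta> k) \<le> M"
    using assms by (auto simp: seq_backwards_bounded_solution_def)
  have "seq_backwards_bounded_solution C (\<eta> (- int n)) (\<lambda>k. \<eta> (k - int n))"
    unfolding seq_backwards_bounded_solution_def
  proof (intro conjI allI impI)
    show "\<eta> (k + 1 - int n) = blinfun_apply (C k) (\<eta> (k - int n))" if "k < 0" for k
      using \<eta>_Suc[of "k - int n"] that by (simp add: algebra_simps)
    show "\<exists>M. \<forall>k\<le>0. norm (\<eta> (k - int n)) \<le> M"
      using M by (intro exI[of _ M]) simp
  qed simp
  then show "\<eta> (- int n) \<in> seq_Vminus C" by (auto simp: seq_Vminus_def)
  have "\<eta> (- int n + int n) = blinfun_apply (evolution (\<lambda>k. C (k + int n)) (- int n) n) (\<eta> (- int n))"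
    by (rule solution_eq_evolution) (rule \<eta>_Suc, simp)
  then show "blinfun_apply (evolution C 0 n) (\<eta> (- int n)) = z" by (simp add: evolution_shift \<eta>0)
qed

lemma evolution_image_seq_Vminus:
  "blinfun_apply (evolution C 0 n) ` seq_Vminus C = seq_Vminus (\<lambda>k. C (k + int n))"
proof
  show "blinfun_apply (evolution C 0 n) ` seq_Vminus C \<subseteq> seq_Vminus (\<lambda>k. C (k + int n))"
    using evolution_in_seq_Vminus by blast
  show "seq_Vminus (\<lambda>k. C (k + int n)) \<subseteq> blinfun_apply (evolution C 0 n) ` seq_Vminus C"
    using seq_Vminus_of_shifted_solution by (fastforce simp: seq_Vminus_def)
qed

text \<open>A kernel vector of the evolution on \<open>V\<^sup>-\<close> has an eventually vanishing, hence bounded,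
  forward orbit, so it lies in \<open>V\<^sup>+ \<inter> V\<^sup>-\<close>.\<close>
lemma inj_on_evolution_seq_Vminus:
  assumes Vplus_Vminus: "\<And>z. z \<in> seq_Vplus C \<Longrightarrow> z \<in> seq_Vminus C \<Longrightarrow> z = 0"
  shows "inj_on (blinfun_apply (evolution C 0 n)) (seq_Vminus C)"
proof (rule inj_onI)
  fix x y assume xy: "x \<in> seq_Vminus C" "y \<in> seq_Vminus C"
    "blinfun_apply (evolution C 0 n) x = blinfun_apply (evolution C 0 n) y"
  define d where "d = x - y"
  have "d \<in> seq_Vminus C" unfolding d_def using subspace_seq_Vminus xy(1,2) by (rule subspace_diff)
  have d_n: "blinfun_apply (evolution C 0 n) d = 0" using xy(3) by (simp add: d_def blinfun.diff_right)
  obtain S where S: "\<And>t. t \<le> n \<Longrightarrow> norm (blinfun_apply (evolution C 0 t) d) \<le> S"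
    using finite_segment_norm_bound[of n "\<lambda>t. blinfun_apply (evolution C 0 t) d"] by blast
  have "norm (blinfun_apply (evolution C 0 t) d) \<le> \<bar>S\<bar>" for t
  proof (cases "t \<le> n")
    case False
    have "blinfun_apply (evolution C 0 ((t - n) + n)) d = 0"
      by (simp only: evolution_add_apply d_n blinfun.zero_right)
    with False show ?thesis by simp
  qed (use S in fastforce)
  then have "d \<in> seq_Vplus C" by (auto simp: seq_Vplus_def)
  then have "d = 0" using Vplus_Vminus \<open>d \<in> seq_Vminus C\<close> by blast
  then show "x = y" by (simp add: d_def)
qed

lemma iso_between_evolution_seq_Vminus:
  assumes inj: "inj_on (blinfun_apply (evolution C 0 n)) (seq_Vminus C)"
    and branch: "\<And>z. z \<in> seq_Vminus (\<lambda>k. C (k + int n)) \<Longrightarrow>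
      seq_backwards_bounded_solution (\<lambda>k. C (k + int n)) z (\<xi> z)"
    and branch_cont: "continuous_on UNIV (\<lambda>z. \<xi> z (- int n))"
  shows "iso_between (evolution C 0 n) (seq_Vminus C) (seq_Vminus (\<lambda>k. C (k + int n)))"
  unfolding iso_between_def
proof
  show "bij_betw (blinfun_apply (evolution C 0 n)) (seq_Vminus C) (seq_Vminus (\<lambda>k. C (k + int n)))"
    using inj evolution_image_seq_Vminus by (simp add: bij_betw_def)
  have "inv_into (seq_Vminus C) (blinfun_apply (evolution C 0 n)) z = \<xi> z (- int n)"
    if "z \<in> seq_Vminus (\<lambda>k. C (k + int n))" for z
    using seq_Vminus_of_shifted_solution[OF branch[OF that]] inv_into_f_f[OF inj] by metis
  then show "continuous_on (seq_Vminus (\<lambda>k. C (k + int n))) (inv_into (seq_Vminus C) (blinfun_apply (evolution C 0 n)))"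
    using continuous_on_subset[OF branch_cont subset_UNIV] continuous_on_cong by fastforce
qed

section \<open>Small perturbations\<close>

locale small_perturbation = discrete_dichotomy A P K a
  for A :: "int \<Rightarrow> 'x::banach \<Rightarrow>\<^sub>L 'x" and P K a +
  fixes B :: "int \<Rightarrow> 'x \<Rightarrow>\<^sub>L 'x" and b :: real
  assumes B_norm_le: "\<And>k. norm (B k) \<le> b" and b_nonneg: "0 \<le> b"
    and b_small: "b * green_const < 1"
begin

definition Apert :: "int \<Rightarrow> 'x \<Rightarrow>\<^sub>L 'x" where "Apert k = A k + B k"

definition bounded_solution :: "(int \<Rightarrow> 'x) \<Rightarrow> (int \<Rightarrow> 'x) \<Rightarrow> bool" where
  "bounded_solution f w \<longleftrightarrow>
     bounded (range w) \<and> (\<forall>n. w (n + 1) = blinfun_apply (Apert n) (w n) + f n)"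

lemma Apert_apply: "blinfun_apply (Apert k) x = blinfun_apply (A k) x + blinfun_apply (B k) x"
  by (simp add: Apert_def plus_blinfun.rep_eq)

lemma B_apply_norm_le: "norm (blinfun_apply (B k) x) \<le> b * norm x"
  using norm_blinfun[of "B k" x] mult_right_mono[OF B_norm_le[of k] norm_ge_zero[of x]] by linarith

lemma contraction_const: "0 \<le> b * green_const" "b * green_const < 1"
  using b_nonneg green_const_pos b_small by simp_all

definition perron_map :: "(int \<Rightarrow> 'x) \<Rightarrow> (int \<Rightarrow> 'x) \<Rightarrow> int \<Rightarrow> 'x" where
  "perron_map f w = green (\<lambda>k. blinfun_apply (B k) (w k) + f k)"

lemma bounded_perturbation_term:
  assumes "bounded (range w)" "bounded (range f)"
  shows "bounded (range (\<lambda>k. blinfun_apply (B k) (w k) + f k))"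
proof -
  obtain M where "\<And>k. norm (w k) \<le> M" using assms(1) by (auto simp: bounded_iff)
  then have "norm (blinfun_apply (B k) (w k)) \<le> b * M" for k
    using B_apply_norm_le[of k "w k"] mult_left_mono[of _ M b] b_nonneg by (meson order_trans)
  then have "bounded (range (\<lambda>k. blinfun_apply (B k) (w k)))" by (auto simp: bounded_iff)
  then show ?thesis using assms(2) by (rule bounded_plus_comp)
qed

lemma bounded_solution_iff_fixpoint:
  assumes "bounded (range f)"
  shows "bounded_solution f w \<longleftrightarrow> bounded (range w) \<and> perron_map f w = w"
proof
  assume w: "bounded_solution f w"
  then have "w = perron_map f w"
    unfolding bounded_solution_def perron_map_def
    by (intro bounded_solution_eq_green bounded_perturbation_term assms) (auto simp: Apert_apply)
  with w show "bounded (range w) \<and> perron_map f w = w" by (simp add: bounded_solution_def)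
next
  assume w: "bounded (range w) \<and> perron_map f w = w"
  have "w (n + 1) = blinfun_apply (Apert n) (w n) + f n" for n
    using green_Suc[OF bounded_perturbation_term[OF conjunct1[OF w] assms], of n] w
    by (simp add: perron_map_def Apert_apply)
  with w show "bounded_solution f w" by (simp add: bounded_solution_def)
qed

lemma perron_map_contraction:
  assumes "\<And>k. norm (u k - v k) \<le> M" "bounded (range u)" "bounded (range v)" "bounded (range f)"
  shows "norm (perron_map f u n - perron_map f v n) \<le> b * green_const * M"
proof -
  have "perron_map f u n - perron_map f v n
      = green (\<lambda>k. blinfun_apply (B k) (u k - v k)) n"
    unfolding perron_map_def
    by (simp add: green_diff[symmetric] bounded_perturbation_term assms blinfun.diff_right)
  also have "norm \<dots> \<le> green_const * (b * M)"
    by (rule green_norm_le) (meson B_apply_norm_le assms(1) b_nonneg mult_left_mono order_trans)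
  finally show ?thesis by (simp add: algebra_simps)
qed

lemma bounded_solution_ex1:
  assumes "bounded (range f)" shows "\<exists>!w. bounded_solution f w"
proof -
  have "\<exists>!w. bounded (range w) \<and> perron_map f w = w"
  proof (rule bounded_seq_contraction_fixpoint[where T = "perron_map f", OF contraction_const])
    show "bounded (range (perron_map f u))" if "bounded (range u)" for u
      unfolding perron_map_def by (intro bounded_green bounded_perturbation_term that assms)
  qed (rule perron_map_contraction, simp_all add: assms)
  then show ?thesis by (simp add: bounded_solution_iff_fixpoint[OF assms])
qed

lemma bounded_solution_norm_le:
  assumes w: "bounded_solution f w" and f: "\<And>k. norm (f k) \<le> F"
  shows "norm (w n) \<le> green_const * F / (1 - b * green_const)"
proof -
  have bounded_w: "bounded (range w)" using w by (simp add: bounded_solution_def)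
  have "bounded (range f)" using f by (auto simp: bounded_iff)
  then have fixpoint: "perron_map f w = w" using w by (simp add: bounded_solution_iff_fixpoint)
  have "norm (w m) \<le> b * green_const * M + green_const * F" if M: "\<And>k. norm (w k) \<le> M" for M m
  proof -
    have "norm (blinfun_apply (B k) (w k) + f k) \<le> b * M + F" for k
      using B_apply_norm_le[of k "w k"] mult_left_mono[OF M[of k] b_nonneg] f[of k]
        norm_triangle_ineq[of "blinfun_apply (B k) (w k)" "f k"] by linarith
    then have "norm (perron_map f w m) \<le> green_const * (b * M + F)"
      unfolding perron_map_def by (rule green_norm_le)
    then show ?thesis by (simp add: fixpoint algebra_simps)
  qed
  then show ?thesis by (rule norm_le_of_contracting_self_bound[OF bounded_w contraction_const])
qed

lemma bounded_solution_add:
  "bounded_solution f w \<Longrightarrow> bounded_solution g v \<Longrightarrow>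
    bounded_solution (\<lambda>k. f k + g k) (\<lambda>k. w k + v k)"
  by (auto simp: bounded_solution_def bounded_plus_comp blinfun.add_right)

lemma bounded_solution_scaleR:
  "bounded_solution f w \<Longrightarrow> bounded_solution (\<lambda>k. c *\<^sub>R f k) (\<lambda>k. c *\<^sub>R w k)"
  by (auto simp: bounded_solution_def bounded_scaleR_comp blinfun.scaleR_right scaleR_add_right)

definition impulse :: "'x \<Rightarrow> int \<Rightarrow> 'x" where "impulse z n = (if n = -1 then z else 0)"

definition impulse_response :: "'x \<Rightarrow> int \<Rightarrow> 'x" where
  "impulse_response z = (THE w. bounded_solution (impulse z) w)"

lemma impulse_add: "impulse (x + y) = (\<lambda>k. impulse x k + impulse y k)"
  by (simp add: impulse_def fun_eq_iff)

lemma impulse_scaleR: "impulse (r *\<^sub>R x) = (\<lambda>k. r *\<^sub>R impulse x k)"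
  by (simp add: impulse_def fun_eq_iff)

lemma bounded_impulse: "bounded (range (impulse z))"
  by (auto simp: bounded_iff impulse_def intro: exI[of _ "norm z"])

lemma bounded_solution_impulse_response: "bounded_solution (impulse z) (impulse_response z)"
  unfolding impulse_response_def by (rule theI'[OF bounded_solution_ex1[OF bounded_impulse]])

lemma impulse_response_eqI: "bounded_solution (impulse z) w \<Longrightarrow> impulse_response z = w"
  using bounded_solution_ex1[OF bounded_impulse] bounded_solution_impulse_response by blast

lemma impulse_response_Suc:
  "impulse_response z (n + 1) = blinfun_apply (Apert n) (impulse_response z n) + impulse z n"
  using bounded_solution_impulse_response by (simp add: bounded_solution_def)

lemma bounded_impulse_response: "bounded (range (impulse_response z))"
  using bounded_solution_impulse_response by (simp add: bounded_solution_def)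

lemma bounded_linear_impulse_response: "bounded_linear (\<lambda>z. impulse_response z n)"
proof (rule bounded_linear_intro[where K = "green_const / (1 - b * green_const)"])
  fix x y r
  have "bounded_solution (impulse (x + y)) (\<lambda>k. impulse_response x k + impulse_response y k)"
    unfolding impulse_add
    by (rule bounded_solution_add[OF bounded_solution_impulse_response bounded_solution_impulse_response])
  then show "impulse_response (x + y) n = impulse_response x n + impulse_response y n"
    by (simp add: impulse_response_eqI)
  have "bounded_solution (impulse (r *\<^sub>R x)) (\<lambda>k. r *\<^sub>R impulse_response x k)"
    unfolding impulse_scaleR by (rule bounded_solution_scaleR[OF bounded_solution_impulse_response])
  then show "impulse_response (r *\<^sub>R x) n = r *\<^sub>R impulse_response x n"
    by (simp add: impulse_response_eqI)
next
  show "norm (impulse_response x n) \<le> norm x * (green_const / (1 - b * green_const))" for x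
    using bounded_solution_norm_le[OF bounded_solution_impulse_response, of x "norm x" n]
    by (simp add: impulse_def ac_simps)
qed

lemma continuous_impulse_response: "continuous_on UNIV (\<lambda>z. impulse_response z n)"
  by (rule linear_continuous_on[OF bounded_linear_impulse_response])

lemma small_perturbation_shift:
  "small_perturbation (\<lambda>k. A (k + s)) (\<lambda>k. P (k + s)) K a (\<lambda>k. B (k + s)) b"
proof -
  have shift: "m + int t + s = m + s + int t" for m t by simp
  interpret shifted: discrete_dichotomy "\<lambda>k. A (k + s)" "\<lambda>k. P (k + s)" K a
    by unfold_locales
      (simp_all add: K_ge_1 a_pos P_idem evolution_shift shift P_evolution unstable_bij
        stable_bound[simplified] unstable_bound[simplified])
  have "shifted.green_const = green_const"
    by (simp add: shifted.green_const_def shifted.q_def green_const_def q_def)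
  then show ?thesis by unfold_locales (simp_all add: B_norm_le b_nonneg b_small)
qed

lemma impulse_response_0_in_seq_Vplus: "impulse_response z 0 \<in> seq_Vplus Apert"
proof -
  have "impulse_response z (0 + int t) = blinfun_apply (evolution Apert 0 t) (impulse_response z 0)" for t
    by (rule solution_eq_evolution) (simp add: impulse_response_Suc impulse_def)
  moreover obtain M where "\<And>k. norm (impulse_response z k) \<le> M"
    using bounded_impulse_response[of z] by (auto simp: bounded_iff)
  ultimately have "norm (blinfun_apply (evolution Apert 0 t) (impulse_response z 0)) \<le> M" for t
    by (metis add_0)
  then show ?thesis by (auto simp: seq_Vplus_def)
qed

definition backward_branch :: "'x \<Rightarrow> int \<Rightarrow> 'x" where
  "backward_branch z k = (if k < 0 then - impulse_response z k else z - impulse_response z 0)"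

lemma backwards_bounded_solution_backward_branch:
  "seq_backwards_bounded_solution Apert (z - impulse_response z 0) (backward_branch z)"
  unfolding seq_backwards_bounded_solution_def
proof (intro conjI allI impI)
  show "backward_branch z 0 = z - impulse_response z 0" by (simp add: backward_branch_def)
  show "backward_branch z (k + 1) = blinfun_apply (Apert k) (backward_branch z k)" if "k < 0" for k
  proof (cases "k = -1")
    case True
    then show ?thesis using impulse_response_Suc[of z "-1"]
      by (simp add: backward_branch_def impulse_def blinfun.minus_right)
  next
    case False
    then show ?thesis using impulse_response_Suc[of z k] that
      by (simp add: backward_branch_def impulse_def blinfun.minus_right)
  qed
  obtain M where M: "\<And>k. norm (impulse_response z k) \<le> M"
    using bounded_impulse_response[of z] by (auto simp: bounded_iff)
  have "norm (backward_branch z k) \<le> M + norm z" for k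
  proof (cases "k < 0")
    case True
    then have "norm (backward_branch z k) = norm (impulse_response z k)"
      by (simp add: backward_branch_def)
    then show ?thesis using M[of k] norm_ge_zero[of z] by linarith
  next
    case False
    then show ?thesis using M[of 0] norm_triangle_ineq4[of z "impulse_response z 0"]
      by (simp add: backward_branch_def)
  qed
  then show "\<exists>M. \<forall>k\<le>0. norm (backward_branch z k) \<le> M" by blast
qed

lemma diff_impulse_response_in_seq_Vminus: "z - impulse_response z 0 \<in> seq_Vminus Apert"
  using backwards_bounded_solution_backward_branch by (auto simp: seq_Vminus_def)

text \<open>A vector of \<open>V\<^sup>+ \<inter> V\<^sup>-\<close> lies on a bounded solution over all of \<open>\<int>\<close>, which is zero
  by uniqueness of bounded solutions.\<close>
lemma seq_Vplus_Int_seq_Vminus: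
  assumes "z \<in> seq_Vplus Apert" "z \<in> seq_Vminus Apert"
  shows "z = 0"
proof -
  obtain M1 where M1: "\<And>t. norm (blinfun_apply (evolution Apert 0 t) z) \<le> M1"
    using assms(1) by (auto simp: seq_Vplus_def)
  obtain \<xi> where "seq_backwards_bounded_solution Apert z \<xi>"
    using assms(2) by (auto simp: seq_Vminus_def)
  then obtain M2 where \<xi>0: "\<xi> 0 = z" and \<xi>_Suc: "\<And>k. k < 0 \<Longrightarrow> \<xi> (k + 1) = blinfun_apply (Apert k) (\<xi> k)"
    and M2: "\<And>k. k \<le> 0 \<Longrightarrow> norm (\<xi> k) \<le> M2"
    unfolding seq_backwards_bounded_solution_def by blast
  define w where "w k = (if 0 \<le> k then blinfun_apply (evolution Apert 0 (nat k)) z else \<xi> k)" for k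
  have "norm (w k) \<le> \<bar>M1\<bar> + \<bar>M2\<bar>" for k
    using M1[of "nat k"] M2[of k] by (cases "0 \<le> k") (auto simp: w_def)
  then have "bounded (range w)" by (auto simp: bounded_iff)
  moreover have "w (n + 1) = blinfun_apply (Apert n) (w n)" for n
  proof (cases "0 \<le> n")
    case True
    then have "nat (n + 1) = Suc (nat n)" by simp
    with True show ?thesis by (simp add: w_def)
  next
    case False
    then show ?thesis using \<xi>_Suc[of n] \<xi>0 by (cases "n = -1") (simp_all add: w_def)
  qed
  ultimately have "bounded_solution (\<lambda>_. 0) w" "bounded_solution (\<lambda>_. 0) (\<lambda>_. 0)"
    by (simp_all add: bounded_solution_def)
  then have "w = (\<lambda>_. 0)" using bounded_solution_ex1[of "\<lambda>_. 0"] by auto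
  then have "w 0 = 0" by simp
  then show ?thesis by (simp add: w_def)
qed

lemma seq_Vplus_eq: "seq_Vplus Apert = {z. impulse_response z 0 = z}"
proof safe
  fix z assume z: "z \<in> seq_Vplus Apert"
  have "z - impulse_response z 0 \<in> seq_Vplus Apert"
    using subspace_seq_Vplus z impulse_response_0_in_seq_Vplus by (rule subspace_diff)
  then show "impulse_response z 0 = z"
    using seq_Vplus_Int_seq_Vminus diff_impulse_response_in_seq_Vminus by fastforce
qed (metis impulse_response_0_in_seq_Vplus)

lemma seq_Vminus_eq: "seq_Vminus Apert = {z. impulse_response z 0 = 0}"
proof safe
  fix z assume z: "z \<in> seq_Vminus Apert"
  have "z - (z - impulse_response z 0) \<in> seq_Vminus Apert"
    using subspace_seq_Vminus z diff_impulse_response_in_seq_Vminus by (rule subspace_diff)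
  then show "impulse_response z 0 = 0"
    using seq_Vplus_Int_seq_Vminus impulse_response_0_in_seq_Vplus by simp
qed (metis diff_impulse_response_in_seq_Vminus diff_zero)

lemma closed_seq_Vplus: "closed (seq_Vplus Apert)"
  unfolding seq_Vplus_eq by (rule closed_Collect_eq[OF continuous_impulse_response continuous_on_id])

lemma closed_seq_Vminus: "closed (seq_Vminus Apert)"
  unfolding seq_Vminus_eq by (rule closed_Collect_eq[OF continuous_impulse_response continuous_on_const])

lemma direct_sum_seq_Vplus_Vminus: "direct_sum (seq_Vplus Apert) (seq_Vminus Apert)"
  unfolding direct_sum_def
proof (intro conjI allI)
  show "seq_Vplus Apert \<inter> seq_Vminus Apert = {0}"
    using seq_Vplus_Int_seq_Vminus subspace_0[OF subspace_seq_Vplus] subspace_0[OF subspace_seq_Vminus]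
    by blast
  show "\<exists>u\<in>seq_Vplus Apert. \<exists>v\<in>seq_Vminus Apert. x = u + v" for x
    using impulse_response_0_in_seq_Vplus diff_impulse_response_in_seq_Vminus
    by (intro bexI[of _ "impulse_response x 0"] bexI[of _ "x - impulse_response x 0"]) auto
qed

lemma iso_between_evolution_Apert:
  "iso_between (evolution Apert 0 n) (seq_Vminus Apert) (seq_Vminus (\<lambda>k. Apert (k + int n)))"
proof -
  interpret shifted: small_perturbation "\<lambda>k. A (k + int n)" "\<lambda>k. P (k + int n)" K a "\<lambda>k. B (k + int n)" b
    by (rule small_perturbation_shift)
  have shifted_Apert: "shifted.Apert = (\<lambda>k. Apert (k + int n))"
    by (simp add: fun_eq_iff shifted.Apert_def Apert_def)
  have "seq_backwards_bounded_solution shifted.Apert z (shifted.backward_branch z)"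
    if "z \<in> seq_Vminus shifted.Apert" for z
    using shifted.backwards_bounded_solution_backward_branch[of z] that
    by (simp add: shifted.seq_Vminus_eq)
  moreover have "continuous_on UNIV (\<lambda>z. shifted.backward_branch z k)" for k
    unfolding shifted.backward_branch_def
    by (cases "k < 0") (simp_all add: continuous_on_minus continuous_on_diff shifted.continuous_impulse_response)
  ultimately show ?thesis
    unfolding shifted_Apert
    by (intro iso_between_evolution_seq_Vminus inj_on_evolution_seq_Vminus seq_Vplus_Int_seq_Vminus)
qed

end

section \<open>Random cocycles along an orbit\<close>

lemma Theta_add: "random_flow M \<theta> \<Longrightarrow> Theta \<theta> s (Theta \<theta> t \<omega>) = Theta \<theta> (s + t) \<omega>"
  by (simp add: random_flow_def Theta_def algebra_simps)

lemma Theta_0: "random_flow M \<theta> \<Longrightarrow> Theta \<theta> 0 \<omega> = \<omega>"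
  by (simp add: random_flow_def Theta_def)

lemma snd_Theta_in_invariant_set:
  "theta_invariant_set \<theta> Om \<Longrightarrow> snd \<omega> \<in> Om \<Longrightarrow> snd (Theta \<theta> m \<omega>) \<in> Om"
  unfolding theta_invariant_set_def Theta_def by (metis image_eqI snd_conv)

lemma Theta_invariant_apply: "Theta_invariant \<theta> D \<Longrightarrow> D (Theta \<theta> m \<omega>) = D \<omega>"
  unfolding Theta_invariant_def by blast

lemma gen_by_eq_evolution:
  "random_flow M \<theta> \<Longrightarrow> gen_by \<theta> A t (Theta \<theta> m \<omega>) = evolution (\<lambda>k. A (Theta \<theta> k \<omega>)) m t"
  by (induction t) (simp_all add: Theta_add add.commute)

lemma gen_by_eq_evolution_0:
  "random_flow M \<theta> \<Longrightarrow> gen_by \<theta> A t \<omega> = evolution (\<lambda>k. A (Theta \<theta> k \<omega>)) 0 t"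
  by (metis Theta_0 gen_by_eq_evolution)

lemma cocycle_eq_gen_by:
  assumes "linear_cocycle M \<theta> \<phi>" "generated_by \<theta> A \<phi>"
  shows "\<phi> = gen_by \<theta> A"
proof (intro ext)
  fix n \<omega>
  have "\<phi> 0 \<omega> = id_blinfun" using assms(1) unfolding linear_cocycle_def by blast
  moreover have "n \<ge> 1 \<Longrightarrow> \<phi> n \<omega> = gen_by \<theta> A n \<omega>" using assms(2) unfolding generated_by_def by blast
  ultimately show "\<phi> n \<omega> = gen_by \<theta> A n \<omega>" by (cases n) auto
qed

lemma Vplus_gen_by:
  "random_flow M \<theta> \<Longrightarrow> Vplus (gen_by \<theta> C) \<omega> = seq_Vplus (\<lambda>k. C (Theta \<theta> k \<omega>))"
  by (simp add: Vplus_def seq_Vplus_def gen_by_eq_evolution_0)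

lemma backwards_bounded_solution_gen_by:
  assumes rf: "random_flow M \<theta>"
  shows "backwards_bounded_solution \<theta> (gen_by \<theta> C) \<omega> z \<xi>
    \<longleftrightarrow> seq_backwards_bounded_solution (\<lambda>k. C (Theta \<theta> k \<omega>)) z \<xi>"
proof -
  have "(\<forall>m n. m \<le> n \<and> n \<le> 0 \<longrightarrow> \<xi> n = blinfun_apply (evolution (\<lambda>k. C (Theta \<theta> k \<omega>)) m (nat (n - m))) (\<xi> m))
      \<longleftrightarrow> (\<forall>k<0. \<xi> (k + 1) = blinfun_apply (C (Theta \<theta> k \<omega>)) (\<xi> k))"
  proof
    assume along_evolution: "\<forall>m n. m \<le> n \<and> n \<le> 0 \<longrightarrow>
      \<xi> n = blinfun_apply (evolution (\<lambda>k. C (Theta \<theta> k \<omega>)) m (nat (n - m))) (\<xi> m)"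
    show "\<forall>k<0. \<xi> (k + 1) = blinfun_apply (C (Theta \<theta> k \<omega>)) (\<xi> k)"
    proof (intro allI impI)
      fix k :: int assume "k < 0"
      then show "\<xi> (k + 1) = blinfun_apply (C (Theta \<theta> k \<omega>)) (\<xi> k)"
        using along_evolution[rule_format, of k "k + 1"] by simp
    qed
  next
    assume step: "\<forall>k<0. \<xi> (k + 1) = blinfun_apply (C (Theta \<theta> k \<omega>)) (\<xi> k)"
    show "\<forall>m n. m \<le> n \<and> n \<le> 0 \<longrightarrow> \<xi> n = blinfun_apply (evolution (\<lambda>k. C (Theta \<theta> k \<omega>)) m (nat (n - m))) (\<xi> m)"
    proof (intro allI impI)
      fix m n :: int assume "m \<le> n \<and> n \<le> 0"
      then have "\<xi> (m + int (nat (n - m))) = blinfun_apply (evolution (\<lambda>k. C (Theta \<theta> k \<omega>)) m (nat (n - m))) (\<xi> m)"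
        using step by (intro solution_eq_evolution) auto
      then show "\<xi> n = blinfun_apply (evolution (\<lambda>k. C (Theta \<theta> k \<omega>)) m (nat (n - m))) (\<xi> m)"
        using \<open>m \<le> n \<and> n \<le> 0\<close> by simp
    qed
  qed
  then show ?thesis
    by (simp add: backwards_bounded_solution_def seq_backwards_bounded_solution_def
        gen_by_eq_evolution[OF rf])
qed

lemma Vminus_gen_by:
  "random_flow M \<theta> \<Longrightarrow> Vminus \<theta> (gen_by \<theta> C) \<omega> = seq_Vminus (\<lambda>k. C (Theta \<theta> k \<omega>))"
  by (simp add: Vminus_def seq_Vminus_def backwards_bounded_solution_gen_by)

lemma discrete_dichotomy_orbit:
  assumes rf: "random_flow M \<theta>" and ed: "exp_dichotomy M \<theta> (gen_by \<theta> A) K \<alpha> Om Pis"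
    and om: "snd \<omega> \<in> Om"
  shows "discrete_dichotomy (\<lambda>k. A (Theta \<theta> k \<omega>)) (\<lambda>k. Pis (Theta \<theta> k \<omega>)) (K \<omega>) (\<alpha> \<omega>)"
proof -
  note parts = ed[unfolded exp_dichotomy_def]
  have om_orbit: "snd (Theta \<theta> m \<omega>) \<in> Om" for m
    using parts om by (blast intro: snd_Theta_in_invariant_set)
  have K_orbit: "K (Theta \<theta> m \<omega>) = K \<omega>" and \<alpha>_orbit: "\<alpha> (Theta \<theta> m \<omega>) = \<alpha> \<omega>" for m
    using parts by (blast intro: Theta_invariant_apply)+
  have Theta_step: "Theta \<theta> (int t) (Theta \<theta> m \<omega>) = Theta \<theta> (m + int t) \<omega>"
    and Theta_back: "Theta \<theta> (- int t) (Theta \<theta> (m + int t) \<omega>) = Theta \<theta> m \<omega>" for m t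
    by (simp_all add: Theta_add[OF rf] add.commute)
  note orbit = gen_by_eq_evolution[OF rf] Theta_step Theta_back K_orbit \<alpha>_orbit
  have idem: "Pis \<omega>p o\<^sub>L Pis \<omega>p = Pis \<omega>p"
    and comm: "Pis (Theta \<theta> (int t) \<omega>p) o\<^sub>L gen_by \<theta> A t \<omega>p = gen_by \<theta> A t \<omega>p o\<^sub>L Pis \<omega>p"
    and iso: "iso_between (gen_by \<theta> A t \<omega>p) (range (blinfun_apply (id_blinfun - Pis \<omega>p)))
      (range (blinfun_apply (id_blinfun - Pis (Theta \<theta> (int t) \<omega>p))))"
    and stable: "norm (gen_by \<theta> A t \<omega>p o\<^sub>L Pis \<omega>p) \<le> K \<omega>p * exp (- \<alpha> \<omega>p * real t)"
    and unstable: "norm (inv_into (range (blinfun_apply (id_blinfun - Pis (Theta \<theta> (- int t) \<omega>p))))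
      (blinfun_apply (gen_by \<theta> A t (Theta \<theta> (- int t) \<omega>p)))
      (blinfun_apply (id_blinfun - Pis \<omega>p) x)) \<le> K \<omega>p * exp (\<alpha> \<omega>p * (- real t)) * norm x"
    if "snd \<omega>p \<in> Om" for \<omega>p t x
    using parts that by blast+
  show ?thesis
  proof
    show "1 \<le> K \<omega>" "0 < \<alpha> \<omega>" using parts by blast+
    fix m t x
    show "Pis (Theta \<theta> m \<omega>) o\<^sub>L Pis (Theta \<theta> m \<omega>) = Pis (Theta \<theta> m \<omega>)"
      using idem[OF om_orbit] .
    show "Pis (Theta \<theta> (m + int t) \<omega>) o\<^sub>L evolution (\<lambda>k. A (Theta \<theta> k \<omega>)) m t
        = evolution (\<lambda>k. A (Theta \<theta> k \<omega>)) m t o\<^sub>L Pis (Theta \<theta> m \<omega>)"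
      using comm[OF om_orbit[of m], of t] by (simp only: orbit)
    show "bij_betw (blinfun_apply (evolution (\<lambda>k. A (Theta \<theta> k \<omega>)) m t))
        (range (blinfun_apply (id_blinfun - Pis (Theta \<theta> m \<omega>))))
        (range (blinfun_apply (id_blinfun - Pis (Theta \<theta> (m + int t) \<omega>))))"
      using iso[OF om_orbit[of m], of t] by (simp only: orbit iso_between_def)
    show "norm (evolution (\<lambda>k. A (Theta \<theta> k \<omega>)) m t o\<^sub>L Pis (Theta \<theta> m \<omega>))
        \<le> K \<omega> * exp (- \<alpha> \<omega> * real t)"
      using stable[OF om_orbit[of m], of t] by (simp only: orbit)
    show "norm (inv_into (range (blinfun_apply (id_blinfun - Pis (Theta \<theta> m \<omega>))))
        (blinfun_apply (evolution (\<lambda>k. A (Theta \<theta> k \<omega>)) m t))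
        (blinfun_apply (id_blinfun - Pis (Theta \<theta> (m + int t) \<omega>)) x))
        \<le> K \<omega> * exp (- \<alpha> \<omega> * real t) * norm x"
      using unstable[OF om_orbit[of "m + int t"], of t x] by (simp only: orbit) (simp add: algebra_simps)
  qed
qed

lemma splitting_on_orbit:
  fixes A B :: "int \<times> 'w \<Rightarrow> ('x::banach \<Rightarrow>\<^sub>L 'x)"
  assumes rf: "random_flow M \<theta>"
    and perturbation: "small_perturbation (\<lambda>k. A (Theta \<theta> k \<omega>)) P K\<^sub>0 a (\<lambda>k. B (Theta \<theta> k \<omega>)) b"
  defines "\<psi> \<equiv> gen_by \<theta> (\<lambda>\<omega>p. A \<omega>p + B \<omega>p)"
  shows "closed (Vplus \<psi> \<omega>) \<and> subspace (Vplus \<psi> \<omega>) \<and>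
    closed (Vminus \<theta> \<psi> \<omega>) \<and> subspace (Vminus \<theta> \<psi> \<omega>) \<and>
    direct_sum (Vplus \<psi> \<omega>) (Vminus \<theta> \<psi> \<omega>) \<and>
    (\<forall>n. blinfun_apply (\<psi> n \<omega>) ` Vplus \<psi> \<omega> \<subseteq> Vplus \<psi> (Theta \<theta> (int n) \<omega>) \<and>
         blinfun_apply (\<psi> n \<omega>) ` Vminus \<theta> \<psi> \<omega> = Vminus \<theta> \<psi> (Theta \<theta> (int n) \<omega>) \<and>
         iso_between (\<psi> n \<omega>) (Vminus \<theta> \<psi> \<omega>) (Vminus \<theta> \<psi> (Theta \<theta> (int n) \<omega>)))"
proof -
  interpret small_perturbation "\<lambda>k. A (Theta \<theta> k \<omega>)" P K\<^sub>0 a "\<lambda>k. B (Theta \<theta> k \<omega>)" b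
    by (fact perturbation)
  have orbit: "(\<lambda>k. A (Theta \<theta> k (Theta \<theta> (int n) \<omega>)) + B (Theta \<theta> k (Theta \<theta> (int n) \<omega>)))
      = (\<lambda>k. Apert (k + int n))" for n
    by (simp add: Apert_def Theta_add[OF rf])
  have Vplus: "Vplus \<psi> (Theta \<theta> (int n) \<omega>) = seq_Vplus (\<lambda>k. Apert (k + int n))"
    and Vminus: "Vminus \<theta> \<psi> (Theta \<theta> (int n) \<omega>) = seq_Vminus (\<lambda>k. Apert (k + int n))" for n
    unfolding \<psi>_def Vplus_gen_by[OF rf] Vminus_gen_by[OF rf] orbit by simp_all
  have \<psi>: "\<psi> n \<omega> = evolution Apert 0 n" for n
    unfolding \<psi>_def gen_by_eq_evolution_0[OF rf] by (simp add: Apert_def[abs_def])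
  show ?thesis
    using Vplus[of 0] Vminus[of 0] Theta_0[OF rf, of \<omega>]
    by (simp add: \<psi> Vplus Vminus closed_seq_Vplus subspace_seq_Vplus closed_seq_Vminus
        subspace_seq_Vminus direct_sum_seq_Vplus_Vminus evolution_image_seq_Vplus
        evolution_image_seq_Vminus iso_between_evolution_Apert)
qed

definition half_gap :: "real \<Rightarrow> real" where
  "half_gap a = (1 - exp (- a)) / (2 * (1 + exp (- a)))"

lemma half_gap_bounds:
  assumes "0 < a"
  shows "0 < half_gap a" and "half_gap a < (1 - exp (- a)) / (1 + exp (- a))"
proof -
  define e where "e = exp (- a)"
  have "0 < e" "e < 1" using assms by (simp_all add: e_def)
  then show "0 < half_gap a" "half_gap a < (1 - exp (- a)) / (1 + exp (- a))"
    unfolding half_gap_def e_def[symmetric] by (auto intro!: divide_pos_pos divide_strict_left_mono)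
qed

lemma half_gap_times_green_const:
  assumes "0 < a" "0 < K"
  shows "half_gap a / K * (K * (1 + exp (- a)) / (1 - exp (- a))) = 1 / 2"
proof -
  define e where "e = exp (- a)"
  have "0 < e" "e < 1" using assms by (simp_all add: e_def)
  then show ?thesis using assms(2) unfolding half_gap_def e_def[symmetric] by (simp add: divide_simps)
qed

lemma small_perturbation_orbit:
  assumes rf: "random_flow M \<theta>" and ed: "exp_dichotomy M \<theta> (gen_by \<theta> A) K \<alpha> Om Pis"
    and om: "snd \<omega> \<in> Om" and B: "\<And>k. norm (B (Theta \<theta> k \<omega>)) \<le> half_gap (\<alpha> \<omega>) / K \<omega>"
  shows "small_perturbation (\<lambda>k. A (Theta \<theta> k \<omega>)) (\<lambda>k. Pis (Theta \<theta> k \<omega>)) (K \<omega>) (\<alpha> \<omega>)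
    (\<lambda>k. B (Theta \<theta> k \<omega>)) (half_gap (\<alpha> \<omega>) / K \<omega>)"
proof -
  interpret discrete_dichotomy "\<lambda>k. A (Theta \<theta> k \<omega>)" "\<lambda>k. Pis (Theta \<theta> k \<omega>)" "K \<omega>" "\<alpha> \<omega>"
    by (rule discrete_dichotomy_orbit[OF rf ed om])
  have K_pos: "0 < K \<omega>" using K_ge_1 by simp
  show ?thesis
  proof
    show "norm (B (Theta \<theta> k \<omega>)) \<le> half_gap (\<alpha> \<omega>) / K \<omega>" for k by (rule B)
    show "0 \<le> half_gap (\<alpha> \<omega>) / K \<omega>"
      using half_gap_bounds(1)[OF a_pos] K_pos by simp
    show "half_gap (\<alpha> \<omega>) / K \<omega> * green_const < 1"
      using half_gap_times_green_const[OF a_pos K_pos] by (simp add: green_const_def q_def)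
  qed
qed

theorem mainTheorem3:
  fixes M :: "'w measure" and \<theta> :: "int \<Rightarrow> 'w \<Rightarrow> 'w"
    and A :: "int \<times> 'w \<Rightarrow> ('x::banach \<Rightarrow>\<^sub>L 'x)"
    and \<phi> :: "nat \<Rightarrow> int \<times> 'w \<Rightarrow> ('x \<Rightarrow>\<^sub>L 'x)"
    and K \<alpha> :: "int \<times> 'w \<Rightarrow> real" and Om :: "'w set"
    and Pis :: "int \<times> 'w \<Rightarrow> ('x \<Rightarrow>\<^sub>L 'x)"
  assumes "prob_space M"
    and "random_flow M \<theta>"
    and "linear_cocycle M \<theta> \<phi>"
    and "generated_by \<theta> A \<phi>"
    and "exp_dichotomy M \<theta> \<phi> K \<alpha> Om Pis"
  shows "\<exists>\<delta> :: int \<times> 'w \<Rightarrow> real. Theta_invariant \<theta> \<delta> \<and>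
     (\<forall>\<omega>p. 0 < \<delta> \<omega>p \<and> \<delta> \<omega>p < (1 - exp (- \<alpha> \<omega>p)) / (1 + exp (- \<alpha> \<omega>p))) \<and>
     (\<forall>B :: int \<times> 'w \<Rightarrow> ('x \<Rightarrow>\<^sub>L 'x).
        (\<forall>\<omega>p k. norm (B (Theta \<theta> k \<omega>p)) \<le> \<delta> \<omega>p / K \<omega>p) \<longrightarrow>
        linear_cocycle M \<theta> (gen_by \<theta> (\<lambda>\<omega>p. A \<omega>p + B \<omega>p)) \<longrightarrow>
        (let \<psi> = gen_by \<theta> (\<lambda>\<omega>p. A \<omega>p + B \<omega>p) in
         \<forall>\<omega>p. snd \<omega>p \<in> Om \<longrightarrow>
           closed (Vplus \<psi> \<omega>p) \<and> subspace (Vplus \<psi> \<omega>p) \<and>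
           closed (Vminus \<theta> \<psi> \<omega>p) \<and> subspace (Vminus \<theta> \<psi> \<omega>p) \<and>
           direct_sum (Vplus \<psi> \<omega>p) (Vminus \<theta> \<psi> \<omega>p) \<and>
           (\<forall>n. blinfun_apply (\<psi> n \<omega>p) ` Vplus \<psi> \<omega>p \<subseteq> Vplus \<psi> (Theta \<theta> (int n) \<omega>p) \<and>
                blinfun_apply (\<psi> n \<omega>p) ` Vminus \<theta> \<psi> \<omega>p = Vminus \<theta> \<psi> (Theta \<theta> (int n) \<omega>p) \<and>
                iso_between (\<psi> n \<omega>p) (Vminus \<theta> \<psi> \<omega>p) (Vminus \<theta> \<psi> (Theta \<theta> (int n) \<omega>p)))))"
proof -
  have ed: "exp_dichotomy M \<theta> (gen_by \<theta> A) K \<alpha> Om Pis"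
    using assms(5) unfolding cocycle_eq_gen_by[OF assms(3,4)] .
  then have \<alpha>_pos: "0 < \<alpha> \<omega>" and \<alpha>_invariant: "Theta_invariant \<theta> \<alpha>" for \<omega>
    unfolding exp_dichotomy_def by blast+
  show ?thesis
  proof (intro exI[of _ "\<lambda>\<omega>. half_gap (\<alpha> \<omega>)"] conjI allI impI, goal_cases)
    case 1
    show ?case using \<alpha>_invariant by (simp add: Theta_invariant_def)
  next
    case (2 \<omega>)
    show ?case by (rule half_gap_bounds(1)[OF \<alpha>_pos])
  next
    case (3 \<omega>)
    show ?case by (rule half_gap_bounds(2)[OF \<alpha>_pos])
  next
    case (4 B)
    show ?case
      unfolding Let_def
    proof (intro allI impI, goal_cases)
      case (1 \<omega>)
      have "norm (B (Theta \<theta> k \<omega>)) \<le> half_gap (\<alpha> \<omega>) / K \<omega>" for k using 4(1) by blast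
      then show ?case by (rule splitting_on_orbit[OF assms(2) small_perturbation_orbit[OF assms(2) ed 1]])
    qed
  qed
qed

end
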